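(* Consider the mixture model $h_Q(x)=\int_0^{\theta_\ast}f(x;\theta)\,\mathrm dQ(\theta)$, $x\in\mathbb Z^{\ge0}$, where $f(\cdot;\theta)$ is a known probability mass function on $\mathbb Z^{\ge0}$ of the discrete exponential family form $f(x;\theta)=g(\theta)w(x)\theta^x$ for $x\in\mathbb Z^{\ge0}$, $\theta\in[0,\theta_\ast]$, with $g$ analytic in a neighborhood of $0$ and $0\le\theta_\ast<\theta_c$, where $\theta_c$ is the radius of convergence of $\sum_{x\ge0}w(x)\theta^x$; assume moreover that $f(x;\theta)$ is continuous in $\theta$. Let $X_1,\dots,X_n$ be observations and let $d$ be a generalized distance satisfying Assumption A. Then a minimum-distance estimator $\hat Q_d\in\operatorname*{argmin}_{\tilde Q\in\mathcal P([0,\theta_\ast])}d(h^{\rm obs}\Vert h_{\tilde Q})$ exists, and both the Vertex Direction Method (VDM) and the Intra Simplex Direction Method (ISDM) produce a sequence of iterates $G$ along which $\Phi(G)\to\Phi(\hat Q_d)$ as the number of iterations increases.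
   Context: $\mathcal P(A)$ denotes the set of probability measures on $A$. A generalized distance is a map $d:\mathcal P(\mathbb Z^{\ge0})\times\mathcal P(\mathbb Z^{\ge0})\to\mathbb R^{\ge0}$, written $d(p\Vert q)$, with $d(p\Vert q)=0$ iff $p=q$. Assumption A: there exist maps $w_d:\mathcal P(\mathbb Z^{\ge0})\to\mathbb R$ and $\phi:\mathbb R^{\ge0}\times\mathbb R^{\ge0}\to\mathbb R$ such that $d(p\Vert q)=w_d(p)+\sum_{x\ge0}\phi(p(x),q(x))$; $\phi$ is continuously differentiable, $\phi(0,y_2)=0$ for all $y_2\ge0$, and $y_2\mapsto\phi(y_1,y_2)$ is strictly convex for each fixed $y_1>0$. The empirical distribution is $h^{\rm obs}(x)=\frac1n\sum_{i=1}^n\mathbf 1(X_i=x)$. Let $\{i_1,\dots,i_q\}$ be the set of distinct observed values and $\alpha_x=\frac1n\sum_{s=1}^n\mathbf 1(X_s=i_x)$. For $G\in\mathcal P([0,\theta_\ast])$ let $\mu_x(G)=\int_0^{\theta_\ast}f(i_x;\theta)\,\mathrm dG(\theta)$ and $\Phi(G)=\sum_{x=1}^q\phi(\alpha_x,\mu_x(G))$. For probability measures $G\ne\delta_0$ and $P$, the directional derivative is $\Phi'(G,P)=\lim_{\epsilon\to0^+}\frac{\Phi((1-\epsilon)G+\epsilon P)-\Phi(G)}{\epsilon}$; $\delta_\lambda$ is the point mass at $\lambda$. VDM: given $\lambda_0\in(0,\theta_\ast)$, start with $G=\delta_{\lambda_0}$; while $\min_{\lambda\in[0,\theta_\ast]}\Phi'(G,\delta_\lambda)<0$: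 choose $\lambda\in\operatorname{argmin}_{\lambda\in[0,\theta_\ast]}\Phi'(G,\delta_\lambda)$, choose $\epsilon\in\operatorname{argmin}_{\epsilon\in[0,1]}\Phi((1-\epsilon)G+\epsilon\delta_\lambda)$, and update $G\leftarrow(1-\epsilon)G+\epsilon\delta_\lambda$; return $G$. ISDM: given $\lambda_0\in(0,\theta_\ast)$, start with $G=\delta_{\lambda_0}$; while $\min_{\lambda\in[0,\theta_\ast]}\Phi'(G,\delta_\lambda)<0$: choose local minima $\lambda_1,\dots,\lambda_s$ of $\lambda\mapsto\Phi'(G,\delta_\lambda)$, choose $(\epsilon_0,\dots,\epsilon_s)\in\operatorname{argmin}\{\Phi(\epsilon_0G+\sum_{x=1}^s\epsilon_x\delta_{\lambda_x}):\epsilon_x\ge0,\sum_x\epsilon_x=1\}$, and update $G\leftarrow\epsilon_0G+\sum_{x=1}^s\epsilon_x\delta_{\lambda_x}$; return $G$. *)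

theory Defs
  imports "HOL-Analysis.Analysis" "HOL-Probability.Probability"
begin

definition strict_convex_on_set :: "real set \<Rightarrow> (real \<Rightarrow> real) \<Rightarrow> bool" where
  "strict_convex_on_set S F \<longleftrightarrow>
     (\<forall>x\<in>S. \<forall>y\<in>S. \<forall>t. x \<noteq> y \<and> 0 < t \<and> t < 1 \<longrightarrow>
        F ((1 - t) * x + t * y) < (1 - t) * F x + t * F y)"

definition analytic_near_zero :: "(real \<Rightarrow> real) \<Rightarrow> bool" where
  "analytic_near_zero g \<longleftrightarrow>
     (\<exists>r>0. \<exists>c :: nat \<Rightarrow> real. \<forall>t. \<bar>t\<bar> < r \<longrightarrow> (\<lambda>k. c k * t ^ k) sums g t)"

definition C1_on_quadrant :: "(real \<Rightarrow> real \<Rightarrow> real) \<Rightarrow> bool" where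
  "C1_on_quadrant \<phi> \<longleftrightarrow>
     (\<exists>D1 D2 :: real \<times> real \<Rightarrow> real.
        continuous_on {z. 0 \<le> fst z \<and> 0 \<le> snd z} D1 \<and>
        continuous_on {z. 0 \<le> fst z \<and> 0 \<le> snd z} D2 \<and>
        (\<forall>z\<in>{z. 0 \<le> fst z \<and> 0 \<le> snd z}.
           ((\<lambda>u. \<phi> (fst u) (snd u)) has_derivative (\<lambda>h. D1 z * fst h + D2 z * snd h))
             (at z within {z. 0 \<le> fst z \<and> 0 \<le> snd z})))"

definition generalized_distance :: "(nat pmf \<Rightarrow> nat pmf \<Rightarrow> real) \<Rightarrow> bool" where
  "generalized_distance d \<longleftrightarrow> (\<forall>p q. 0 \<le> d p q \<and> (d p q = 0 \<longleftrightarrow> p = q))"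

definition assumptionA :: "(nat pmf \<Rightarrow> nat pmf \<Rightarrow> real) \<Rightarrow> (real \<Rightarrow> real \<Rightarrow> real) \<Rightarrow> bool" where
  "assumptionA d \<phi> \<longleftrightarrow>
     (\<exists>wd :: nat pmf \<Rightarrow> real. \<forall>p q. d p q = wd p + (\<Sum>x. \<phi> (pmf p x) (pmf q x))) \<and>
     C1_on_quadrant \<phi> \<and>
     (\<forall>y2\<ge>0. \<phi> 0 y2 = 0) \<and>
     (\<forall>y1>0. strict_convex_on_set {0..} (\<phi> y1))"

definition probs_on :: "real \<Rightarrow> real measure set" where
  "probs_on ths = {Q. prob_space Q \<and> sets Q = sets borel \<and> emeasure Q {0..ths} = 1}"

definition mixture_pmf :: "(nat \<Rightarrow> real \<Rightarrow> real) \<Rightarrow> real \<Rightarrow> real measure \<Rightarrow> nat pmf" where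
  "mixture_pmf f ths Q = embed_pmf (\<lambda>x. LINT \<theta>:{0..ths}|Q. f x \<theta>)"

text \<open>Empirical distribution of \<open>X_1,\<dots>,X_n\<close> (here indexed \<open>X 0, \<dots>, X (n-1)\<close>).\<close>
definition empirical :: "nat \<Rightarrow> (nat \<Rightarrow> nat) \<Rightarrow> nat pmf" where
  "empirical n X = map_pmf X (pmf_of_set {..<n})"

definition Phi :: "(real \<Rightarrow> real \<Rightarrow> real) \<Rightarrow> (nat \<Rightarrow> real \<Rightarrow> real) \<Rightarrow> real \<Rightarrow> nat \<Rightarrow> (nat \<Rightarrow> nat)
                   \<Rightarrow> real measure \<Rightarrow> real" where
  "Phi \<phi> f ths n X G =
     (\<Sum>v\<in>X ` {..<n}. \<phi> (pmf (empirical n X) v) (LINT \<theta>:{0..ths}|G. f v \<theta>))"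

definition simplex_comb :: "real pmf \<Rightarrow> real \<Rightarrow> real set \<Rightarrow> (real \<Rightarrow> real) \<Rightarrow> real pmf" where
  "simplex_comb G e0 L e =
     embed_pmf (\<lambda>t. e0 * pmf G t + (\<Sum>l\<in>L. e l * indicator {l} t))"

definition simplex_weights :: "real set \<Rightarrow> real \<Rightarrow> (real \<Rightarrow> real) \<Rightarrow> bool" where
  "simplex_weights L e0 e \<longleftrightarrow> 0 \<le> e0 \<and> (\<forall>l\<in>L. 0 \<le> e l) \<and> e0 + (\<Sum>l\<in>L. e l) = 1"

definition vmix :: "real \<Rightarrow> real \<Rightarrow> real pmf \<Rightarrow> real pmf" where
  "vmix \<epsilon> l G = simplex_comb G (1 - \<epsilon>) {l} (\<lambda>_. \<epsilon>)"

definition Phi_dir :: "(real \<Rightarrow> real \<Rightarrow> real) \<Rightarrow> (nat \<Rightarrow> real \<Rightarrow> real) \<Rightarrow> real \<Rightarrow> nat \<Rightarrow> (nat \<Rightarrow> nat)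
                   \<Rightarrow> real pmf \<Rightarrow> real \<Rightarrow> real" where
  "Phi_dir \<phi> f ths n X G l =
     Lim (at_right 0) (\<lambda>\<epsilon>. (Phi \<phi> f ths n X (measure_pmf (vmix \<epsilon> l G))
                            - Phi \<phi> f ths n X (measure_pmf G)) / \<epsilon>)"

text \<open>One pass of the VDM while-loop; once the loop condition fails, the iterate is kept.\<close>
definition vdm_step :: "(real \<Rightarrow> real \<Rightarrow> real) \<Rightarrow> (nat \<Rightarrow> real \<Rightarrow> real) \<Rightarrow> real \<Rightarrow> nat \<Rightarrow> (nat \<Rightarrow> nat)
                   \<Rightarrow> real pmf \<Rightarrow> real pmf \<Rightarrow> bool" where
  "vdm_step \<phi> f ths n X G G' \<longleftrightarrow>
     (if \<exists>l\<in>{0..ths}. Phi_dir \<phi> f ths n X G l < 0 then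
        (\<exists>l\<in>{0..ths}. (\<forall>l'\<in>{0..ths}. Phi_dir \<phi> f ths n X G l \<le> Phi_dir \<phi> f ths n X G l') \<and>
           (\<exists>\<epsilon>\<in>{0..1}. (\<forall>\<epsilon>'\<in>{0..1}. Phi \<phi> f ths n X (measure_pmf (vmix \<epsilon> l G))
                                      \<le> Phi \<phi> f ths n X (measure_pmf (vmix \<epsilon>' l G))) \<and>
                        G' = vmix \<epsilon> l G))
      else G' = G)"

definition local_min_on :: "real set \<Rightarrow> (real \<Rightarrow> real) \<Rightarrow> real \<Rightarrow> bool" where
  "local_min_on S F l \<longleftrightarrow> l \<in> S \<and> (\<exists>r>0. \<forall>l'\<in>S. \<bar>l' - l\<bar> < r \<longrightarrow> F l \<le> F l')"

text \<open>One pass of the ISDM while-loop; once the loop condition fails, the iterate is kept.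
  The chosen finite set of local minima must contain a global minimiser.\<close>
definition isdm_step :: "(real \<Rightarrow> real \<Rightarrow> real) \<Rightarrow> (nat \<Rightarrow> real \<Rightarrow> real) \<Rightarrow> real \<Rightarrow> nat \<Rightarrow> (nat \<Rightarrow> nat)
                   \<Rightarrow> real pmf \<Rightarrow> real pmf \<Rightarrow> bool" where
  "isdm_step \<phi> f ths n X G G' \<longleftrightarrow>
     (if \<exists>l\<in>{0..ths}. Phi_dir \<phi> f ths n X G l < 0 then
        (\<exists>L. finite L \<and> L \<noteq> {} \<and>
           (\<forall>l\<in>L. local_min_on {0..ths} (Phi_dir \<phi> f ths n X G) l) \<and>
           (\<exists>l\<in>L. \<forall>l'\<in>{0..ths}. Phi_dir \<phi> f ths n X G l \<le> Phi_dir \<phi> f ths n X G l') \<and>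
           (\<exists>e0 e. simplex_weights L e0 e \<and>
              (\<forall>e0' e'. simplex_weights L e0' e' \<longrightarrow>
                 Phi \<phi> f ths n X (measure_pmf (simplex_comb G e0 L e))
                   \<le> Phi \<phi> f ths n X (measure_pmf (simplex_comb G e0' L e'))) \<and>
              G' = simplex_comb G e0 L e))
      else G' = G)"

end

theory Submission
  imports Defs
begin

text \<open>
  By Assumption A, \<open>d(h_obs || h_Q)\<close> is a constant plus \<open>\<Phi>(Q)\<close>, and \<open>\<Phi>\<close> depends on \<open>Q\<close> only
  through the finitely many mixture probabilities \<open>\<mu>_v(Q)\<close>, \<open>v\<close> observed, in each of which it is
  convex and \<open>C\<^sup>1\<close>.

  A minimiser exists because probability measures on \<open>[0,\<theta>*]\<close> are tight: by Helly's selection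
  theorem a minimising sequence has a weakly convergent subsequence, and pushing the limit forward
  along the clamp to \<open>[0,\<theta>*]\<close> gives a measure on \<open>[0,\<theta>*]\<close> whose \<open>\<mu>_v\<close> are the limits.

  VDM and ISDM are Frank-Wolfe methods: each new iterate is at least as good as every point of the
  segment from \<open>G\<close> towards a steepest vertex \<open>\<delta>_\<lambda>\<close>. By convexity the steepest directional
  derivative is at most \<open>\<Phi>(Q) - \<Phi>(G)\<close> for every \<open>Q\<close>, and uniform continuity of the partial
  derivative of \<open>\<phi>\<close> on \<open>[0,1]\<close> gives a first-order bound along these segments that is uniform in
  \<open>G\<close>. Hence the gap \<open>h_k = \<Phi>(G_k) - \<Phi>(Q)\<close> satisfies \<open>h_(k+1) \<le> (1 - \<epsilon>) h_k + \<epsilon> \<eta>\<close> for all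
  small \<open>\<epsilon>\<close>, which forces \<open>h_k \<rightarrow> 0\<close>.

  Only nonnegativity, normalisation and continuity of \<open>f(\<cdot>;\<theta>)\<close> are used.
\<close>

section \<open>Convex functions of a real variable\<close>

lemma segment_difference_quotient_tendsto:
  fixes f :: "real \<Rightarrow> real"
  assumes A: "convex A" and x: "x \<in> A" and y: "y \<in> A"
    and deriv: "(f has_real_derivative f') (at x within A)"
  shows "((\<lambda>e. (f (x + e * (y - x)) - f x) / e) \<longlongrightarrow> f' * (y - x)) (at_right 0)"
proof -
  define g where "g e = x + e * (y - x)" for e :: real
  have "g ` {0..1} \<subseteq> A"
    using convexD_alt[OF A x y] by (auto simp: g_def algebra_simps)
  then have "(f has_real_derivative f') (at (g 0) within g ` {0..1})"
    using deriv by (auto simp: g_def intro: DERIV_subset)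
  moreover have "(g has_real_derivative (y - x)) (at 0 within {0..1})"
    unfolding g_def by (auto intro!: derivative_eq_intros)
  ultimately have "(f \<circ> g has_real_derivative f' * (y - x)) (at 0 within {0..1})"
    by (rule DERIV_image_chain)
  then show ?thesis
    by (simp add: has_field_derivative_iff at_within_Icc_at_right g_def)
qed

lemma convex_on_above_tangent_within:
  fixes f :: "real \<Rightarrow> real"
  assumes conv: "convex_on A f" and x: "x \<in> A" and y: "y \<in> A"
    and deriv: "(f has_real_derivative f') (at x within A)"
  shows "f' * (y - x) \<le> f y - f x"
proof (rule tendsto_upperbound)
  show "((\<lambda>e. (f (x + e * (y - x)) - f x) / e) \<longlongrightarrow> f' * (y - x)) (at_right 0)"
    using convex_on_imp_convex[OF conv] x y deriv by (rule segment_difference_quotient_tendsto)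
  show "\<forall>\<^sub>F e in at_right 0. (f (x + e * (y - x)) - f x) / e \<le> f y - f x"
  proof (rule eventually_at_rightI[of 0 1])
    fix e :: real assume e: "e \<in> {0<..<1}"
    have "f (x + e * (y - x)) = f ((1 - e) *\<^sub>R x + e *\<^sub>R y)"
      by (simp add: algebra_simps)
    also have "\<dots> \<le> (1 - e) * f x + e * f y"
      using e x y by (intro convex_onD[OF conv]) auto
    finally have "f (x + e * (y - x)) - f x \<le> (f y - f x) * e"
      by (simp add: algebra_simps)
    then show "(f (x + e * (y - x)) - f x) / e \<le> f y - f x"
      using e by (simp add: pos_divide_le_eq)
  qed simp
qed simp

lemma convex_on_uniform_first_order_bound:
  fixes f :: "real \<Rightarrow> real"
  assumes conv: "convex_on A f" and K: "compact K" "K \<subseteq> A"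
    and deriv: "\<And>x. x \<in> K \<Longrightarrow> (f has_real_derivative f' x) (at x within A)"
    and cont: "continuous_on K f'" and \<eta>: "0 < \<eta>"
  shows "\<exists>\<delta>>0. \<forall>x\<in>K. \<forall>y\<in>K. \<bar>y - x\<bar> < \<delta> \<longrightarrow> f y - f x - f' x * (y - x) \<le> \<eta> * \<bar>y - x\<bar>"
proof -
  obtain \<delta> where \<delta>: "\<delta> > 0" and close: "\<And>x y. x \<in> K \<Longrightarrow> y \<in> K \<Longrightarrow> \<bar>y - x\<bar> < \<delta> \<Longrightarrow> \<bar>f' y - f' x\<bar> < \<eta>"
    using compact_uniformly_continuous[OF cont K(1)] \<eta>
    unfolding uniformly_continuous_on_def dist_real_def by metis
  have "f y - f x - f' x * (y - x) \<le> \<eta> * \<bar>y - x\<bar>"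
    if x: "x \<in> K" and y: "y \<in> K" and xy: "\<bar>y - x\<bar> < \<delta>" for x y
  proof -
    have "f' y * (x - y) \<le> f x - f y"
      using K(2) x y by (intro convex_on_above_tangent_within[OF conv _ _ deriv]) auto
    then have "f y - f x - f' x * (y - x) \<le> (f' y - f' x) * (y - x)"
      by (simp add: algebra_simps)
    also have "\<dots> \<le> \<bar>f' y - f' x\<bar> * \<bar>y - x\<bar>"
      by (metis abs_ge_self abs_mult)
    also have "\<dots> \<le> \<eta> * \<bar>y - x\<bar>"
      using close[OF x y xy] by (intro mult_right_mono) auto
    finally show ?thesis .
  qed
  with \<delta> show ?thesis by blast
qed

lemma convex_on_segment_first_order_bound:
  fixes p :: "real \<Rightarrow> real"
  assumes conv: "convex_on {0..} p"
    and deriv: "\<And>x. 0 \<le> x \<Longrightarrow> (p has_real_derivative p' x) (at x within {0..})"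
    and cont: "continuous_on {0..} p'" and \<eta>: "0 < \<eta>"
  shows "\<exists>\<delta>>0. \<forall>x\<in>{0..1}. \<forall>s\<in>{0..1}. \<forall>e. 0 \<le> e \<longrightarrow> e < \<delta> \<longrightarrow> e \<le> 1 \<longrightarrow>
           p ((1 - e) * x + e * s) - p x - e * (p' x * (s - x)) \<le> \<eta> * e"
proof -
  obtain \<delta> where \<delta>: "\<delta> > 0" and bound: "\<forall>x\<in>{0..1}. \<forall>y\<in>{0..1}. \<bar>y - x\<bar> < \<delta> \<longrightarrow>
                                     p y - p x - p' x * (y - x) \<le> \<eta> * \<bar>y - x\<bar>"
    using convex_on_uniform_first_order_bound[OF conv compact_Icc[of 0 1] _ deriv continuous_on_subset[OF cont] \<eta>]
    by auto
  have "p ((1 - e) * x + e * s) - p x - e * (p' x * (s - x)) \<le> \<eta> * e"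
    if x: "x \<in> {0..1}" and s: "s \<in> {0..1}" and e: "0 \<le> e" "e < \<delta>" "e \<le> 1" for x s e
  proof -
    have diff: "(1 - e) * x + e * s - x = e * (s - x)"
      by (simp add: algebra_simps)
    have y: "(1 - e) * x + e * s \<in> {0..1}"
      using convexD_alt[OF convex_real_interval(5) x s, of e] e by (simp add: algebra_simps)
    have close: "\<bar>e * (s - x)\<bar> \<le> e"
      using x s e by (auto simp: abs_mult intro: mult_left_le)
    then have "\<bar>(1 - e) * x + e * s - x\<bar> < \<delta>"
      using e by (simp add: diff)
    then have "p ((1 - e) * x + e * s) - p x - p' x * (e * (s - x)) \<le> \<eta> * \<bar>e * (s - x)\<bar>"
      using bound x y unfolding diff[symmetric] by blast
    also have "\<dots> \<le> \<eta> * e"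
      using close \<eta> by (intro mult_left_mono) auto
    finally show ?thesis
      by (simp add: algebra_simps)
  qed
  with \<delta> show ?thesis
    by blast
qed

lemma strict_convex_on_set_imp_convex_on:
  assumes "convex S" "strict_convex_on_set S F"
  shows "convex_on S F"
proof (rule convex_onI[OF _ assms(1)])
  fix t x y :: real assume "0 < t" "t < 1" "x \<in> S" "y \<in> S"
  show "F ((1 - t) *\<^sub>R x + t *\<^sub>R y) \<le> (1 - t) * F x + t * F y"
  proof (cases "x = y")
    case False
    then have "F ((1 - t) * x + t * y) < (1 - t) * F x + t * F y"
      using assms(2) \<open>0 < t\<close> \<open>t < 1\<close> \<open>x \<in> S\<close> \<open>y \<in> S\<close>
      unfolding strict_convex_on_set_def by blast
    then show ?thesis
      by simp
  qed (simp add: algebra_simps)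
qed

section \<open>Descent sequences and minimising sequences\<close>

lemma tendsto_zero_of_relaxed_descent:
  fixes h :: "nat \<Rightarrow> real"
  assumes nonneg: "\<And>k. 0 \<le> h k"
    and descent: "\<And>\<eta>. 0 < \<eta> \<Longrightarrow> \<exists>\<delta>>0. \<forall>k e. 0 \<le> e \<longrightarrow> e < \<delta> \<longrightarrow> e \<le> 1 \<longrightarrow>
                   h (Suc k) \<le> (1 - e) * h k + e * \<eta>"
  shows "h \<longlonglongrightarrow> 0"
proof -
  obtain \<delta>1 where "\<delta>1 > 0" and step1: "\<forall>k e. 0 \<le> e \<longrightarrow> e < \<delta>1 \<longrightarrow> e \<le> 1 \<longrightarrow> h (Suc k) \<le> (1 - e) * h k + e * 1"
    using descent[OF zero_less_one] by blast
  have "h (Suc k) \<le> h k" for k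
    using step1[THEN spec, of k, THEN spec, of 0] \<open>\<delta>1 > 0\<close> by simp
  then have dec: "decseq h"
    by (rule decseq_SucI)
  obtain L where L: "h \<longlonglongrightarrow> L"
    using decseq_convergent[OF dec, of 0] nonneg by blast
  have "L \<ge> 0"
    by (rule tendsto_lowerbound[OF L]) (simp_all add: nonneg)
  moreover have "L \<le> 0"
  proof (rule ccontr)
    assume "\<not> L \<le> 0"
    then obtain \<delta> where \<delta>: "\<delta> > 0"
      and step: "\<forall>k e. 0 \<le> e \<longrightarrow> e < \<delta> \<longrightarrow> e \<le> 1 \<longrightarrow> h (Suc k) \<le> (1 - e) * h k + e * (L / 2)"
      using descent[of "L / 2"] by auto
    define e where "e = min 1 (\<delta> / 2)"
    have e: "0 < e" "e < \<delta>" "e \<le> 1"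
      using \<delta> by (auto simp: e_def)
    have "(\<lambda>k. h (Suc k)) \<longlonglongrightarrow> L"
      using L by (rule LIMSEQ_Suc)
    moreover have "(\<lambda>k. (1 - e) * h k + e * (L / 2)) \<longlonglongrightarrow> (1 - e) * L + e * (L / 2)"
      using L by (intro tendsto_intros)
    moreover have "\<forall>k. h (Suc k) \<le> (1 - e) * h k + e * (L / 2)"
      using step e by simp
    ultimately have "L \<le> (1 - e) * L + e * (L / 2)"
      by (intro tendsto_le[of sequentially]) (auto intro: always_eventually)
    then have "L * e \<le> 0"
      by (simp add: algebra_simps)
    then show False
      using \<open>\<not> L \<le> 0\<close> e mult_pos_pos[of L e] by linarith
  qed
  ultimately show ?thesis
    using L by simp
qed

lemma attains_min_if_subsequences_converge:
  fixes P :: "'a \<Rightarrow> real"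
  assumes ne: "S \<noteq> {}" and bdd: "bdd_below (P ` S)"
    and subseq: "\<And>Qs :: nat \<Rightarrow> 'a. (\<And>k. Qs k \<in> S) \<Longrightarrow>
                   \<exists>r :: nat \<Rightarrow> nat. \<exists>M. strict_mono r \<and> M \<in> S \<and> (\<lambda>k. P (Qs (r k))) \<longlonglongrightarrow> P M"
  shows "\<exists>Q\<in>S. \<forall>Q'\<in>S. P Q \<le> P Q'"
proof -
  define I where "I = Inf (P ` S)"
  have lower: "I \<le> P Q" if "Q \<in> S" for Q
    unfolding I_def using bdd that by (simp add: cInf_lower)
  have "\<exists>Q\<in>S. P Q < I + 1 / (real k + 1)" for k
  proof -
    have "Inf (P ` S) < I + 1 / (real k + 1)"
      by (simp add: I_def)
    then show ?thesis
      using cInf_lessD[of "P ` S"] ne by blast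
  qed
  then obtain Qs where Qs: "\<And>k. Qs k \<in> S" and near: "\<And>k. P (Qs k) < I + 1 / (real k + 1)"
    by metis
  obtain r M where r: "strict_mono r" and M: "M \<in> S" and lim: "(\<lambda>k. P (Qs (r k))) \<longlonglongrightarrow> P M"
    using subseq[of Qs] Qs by auto
  have "(\<lambda>k. P (Qs (r k))) \<longlonglongrightarrow> I"
  proof (rule tendsto_sandwich[of "\<lambda>_. I" _ _ "\<lambda>k. I + 1 / (real k + 1)"])
    show "\<forall>\<^sub>F k in sequentially. I \<le> P (Qs (r k))"
      using lower Qs by auto
    have "P (Qs (r k)) \<le> I + 1 / (real k + 1)" for k
    proof -
      have "1 / (real (r k) + 1) \<le> 1 / (real k + 1)"
        using seq_suble[OF r, of k] by (intro divide_left_mono) auto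
      then show ?thesis
        using near[of "r k"] by linarith
    qed
    then show "\<forall>\<^sub>F k in sequentially. P (Qs (r k)) \<le> I + 1 / (real k + 1)"
      by simp
    show "(\<lambda>k. I + 1 / (real k + 1)) \<longlonglongrightarrow> I"
      using LIMSEQ_inverse_real_of_nat_add[of I] by (simp add: inverse_eq_divide add.commute)
  qed simp
  with lim have "P M = I"
    by (rule LIMSEQ_unique)
  with M lower show ?thesis
    by auto
qed

section \<open>Mixing distributions\<close>

definition finite_pmf_on :: "'a set \<Rightarrow> 'a pmf \<Rightarrow> bool" where
  "finite_pmf_on S G \<longleftrightarrow> finite (set_pmf G) \<and> set_pmf G \<subseteq> S"

definition mixture_prob :: "(nat \<Rightarrow> real \<Rightarrow> real) \<Rightarrow> real \<Rightarrow> real measure \<Rightarrow> nat \<Rightarrow> real" where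
  "mixture_prob f ths Q v = (LINT \<theta>:{0..ths}|Q. f v \<theta>)"

lemma Phi_eq_sum_mixture_prob:
  "Phi \<phi> f ths n X Q = (\<Sum>v\<in>X ` {..<n}. \<phi> (pmf (empirical n X) v) (mixture_prob f ths Q v))"
  unfolding Phi_def mixture_prob_def ..

lemma finite_pmf_on_return_pmf: "x \<in> S \<Longrightarrow> finite_pmf_on S (return_pmf x)"
  by (simp add: finite_pmf_on_def)

lemma mixture_prob_measure_pmf:
  assumes "finite S" "set_pmf G \<subseteq> S" "S \<subseteq> {0..ths}"
  shows "mixture_prob f ths (measure_pmf G) v = (\<Sum>t\<in>S. pmf G t * f v t)"
proof -
  have "mixture_prob f ths (measure_pmf G) v = (\<Sum>t\<in>S. (indicator {0..ths} t *\<^sub>R f v t) * pmf G t)"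
    unfolding mixture_prob_def set_lebesgue_integral_def
    by (rule integral_measure_pmf_real) (use assms in auto)
  also have "\<dots> = (\<Sum>t\<in>S. pmf G t * f v t)"
    using assms by (intro sum.cong) (auto simp: indicator_def)
  finally show ?thesis .
qed

lemma mixture_prob_measure_pmf_bounds:
  assumes G: "finite_pmf_on {0..ths} G"
    and f: "\<And>v t. t \<in> {0..ths} \<Longrightarrow> f v t \<in> {0..1}"
  shows "mixture_prob f ths (measure_pmf G) v \<in> {0..1}"
proof -
  have fin: "finite (set_pmf G)" and sub: "set_pmf G \<subseteq> {0..ths}"
    using G by (auto simp: finite_pmf_on_def)
  have eq: "mixture_prob f ths (measure_pmf G) v = (\<Sum>t\<in>set_pmf G. pmf G t * f v t)"
    using fin sub by (rule mixture_prob_measure_pmf[OF _ order_refl])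
  have "(\<Sum>t\<in>set_pmf G. pmf G t * f v t) \<le> (\<Sum>t\<in>set_pmf G. pmf G t)"
    using sub f by (intro sum_mono mult_left_le) auto
  also have "\<dots> = 1"
    using sum_pmf_eq_1[OF fin order_refl] .
  finally show ?thesis
    using sub f by (auto simp: eq intro!: sum_nonneg)
qed

lemma pmf_simplex_comb:
  assumes G: "finite (set_pmf G)" and L: "finite L" and w: "simplex_weights L e0 e"
  shows "pmf (simplex_comb G e0 L e) t = e0 * pmf G t + (\<Sum>l\<in>L. e l * indicator {l} t)"
proof -
  define p where "p t = e0 * pmf G t + (\<Sum>l\<in>L. e l * indicator {l} t)" for t
  define S where "S = set_pmf G \<union> L"
  have S: "finite S" "set_pmf G \<subseteq> S" "L \<subseteq> S"
    using G L by (auto simp: S_def)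
  have p_nonneg: "0 \<le> p t" for t
    using w by (auto simp: p_def simplex_weights_def intro!: sum_nonneg add_nonneg_nonneg)
  have p_zero: "p t = 0" if "t \<notin> S" for t
  proof -
    have "pmf G t = 0"
      using that S by (auto simp: set_pmf_eq)
    moreover have "(\<Sum>l\<in>L. e l * indicator {l} t) = 0"
      using that S by (intro sum.neutral) (auto simp: indicator_def)
    ultimately show ?thesis
      by (simp add: p_def)
  qed
  have "(\<Sum>t\<in>S. \<Sum>l\<in>L. e l * indicator {l} t) = (\<Sum>l\<in>L. \<Sum>t\<in>S. e l * indicator {l} t)"
    by (rule sum.swap)
  also have "\<dots> = (\<Sum>l\<in>L. e l)"
    using S by (intro sum.cong) (auto simp: indicator_def sum.delta' subset_iff)
  finally have "(\<Sum>t\<in>S. p t) = e0 * (\<Sum>t\<in>S. pmf G t) + (\<Sum>l\<in>L. e l)"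
    by (simp add: p_def sum.distrib sum_distrib_left)
  also have "\<dots> = 1"
    using w sum_pmf_eq_1[OF S(1,2)] by (simp add: simplex_weights_def)
  finally have "(\<integral>\<^sup>+t. ennreal (p t) \<partial>count_space UNIV) = 1"
    using S p_zero p_nonneg by (subst nn_integral_count_space'[of S]) auto
  then show ?thesis
    unfolding simplex_comb_def p_def[symmetric] using p_nonneg by (intro pmf_embed_pmf) auto
qed

lemma simplex_comb_finite_pmf_on:
  assumes "finite_pmf_on A G" "finite L" "L \<subseteq> A" "simplex_weights L e0 e"
  shows "finite_pmf_on A (simplex_comb G e0 L e)"
proof -
  have "pmf (simplex_comb G e0 L e) t = 0" if "t \<notin> set_pmf G \<union> L" for t
    using that assms
    by (auto simp: pmf_simplex_comb finite_pmf_on_def set_pmf_eq indicator_def intro!: sum.neutral)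
  then have "set_pmf (simplex_comb G e0 L e) \<subseteq> set_pmf G \<union> L"
    by (auto simp: set_pmf_eq)
  then show ?thesis
    using assms by (auto simp: finite_pmf_on_def intro: finite_subset)
qed

lemma mixture_prob_simplex_comb:
  assumes G: "finite_pmf_on {0..ths} G" and L: "finite L" "L \<subseteq> {0..ths}"
    and w: "simplex_weights L e0 e"
  shows "mixture_prob f ths (measure_pmf (simplex_comb G e0 L e)) v
           = e0 * mixture_prob f ths (measure_pmf G) v + (\<Sum>l\<in>L. e l * f v l)"
proof -
  define S where "S = set_pmf G \<union> L"
  have S: "finite S" "set_pmf G \<subseteq> S" "L \<subseteq> S" "S \<subseteq> {0..ths}"
    using G L by (auto simp: S_def finite_pmf_on_def)
  have "finite_pmf_on S (simplex_comb G e0 L e)"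
    by (rule simplex_comb_finite_pmf_on) (use S L w in \<open>auto simp: finite_pmf_on_def intro: finite_subset\<close>)
  then have set: "set_pmf (simplex_comb G e0 L e) \<subseteq> S"
    by (simp add: finite_pmf_on_def)
  have G_fin: "finite (set_pmf G)"
    using G by (simp add: finite_pmf_on_def)
  have "mixture_prob f ths (measure_pmf (simplex_comb G e0 L e)) v
          = (\<Sum>t\<in>S. (e0 * pmf G t + (\<Sum>l\<in>L. e l * indicator {l} t)) * f v t)"
    using S set by (simp add: mixture_prob_measure_pmf[OF S(1) _ S(4)] pmf_simplex_comb[OF G_fin L(1) w])
  also have "\<dots> = e0 * (\<Sum>t\<in>S. pmf G t * f v t) + (\<Sum>l\<in>L. \<Sum>t\<in>S. e l * indicator {l} t * f v t)"
    by (subst sum.swap) (simp add: algebra_simps sum.distrib sum_distrib_left sum_distrib_right)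
  also have "(\<Sum>l\<in>L. \<Sum>t\<in>S. e l * indicator {l} t * f v t) = (\<Sum>l\<in>L. e l * f v l)"
  proof (rule sum.cong)
    fix l assume "l \<in> L"
    have "(\<Sum>t\<in>S. e l * indicator {l} t * f v t) = (\<Sum>t\<in>S. if t = l then e l * f v l else 0)"
      by (rule sum.cong) (auto simp: indicator_def)
    then show "(\<Sum>t\<in>S. e l * indicator {l} t * f v t) = e l * f v l"
      using \<open>l \<in> L\<close> S by auto
  qed simp
  finally show ?thesis
    using S by (simp add: mixture_prob_measure_pmf[OF S(1) _ S(4)])
qed

lemma simplex_weights_vertex:
  "e \<in> {0..1} \<Longrightarrow> simplex_weights {l} (1 - e) (\<lambda>_. e)"
  by (simp add: simplex_weights_def)

lemma vmix_finite_pmf_on: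
  "finite_pmf_on A G \<Longrightarrow> l \<in> A \<Longrightarrow> e \<in> {0..1} \<Longrightarrow> finite_pmf_on A (vmix e l G)"
  unfolding vmix_def by (rule simplex_comb_finite_pmf_on) (auto simp: simplex_weights_vertex)

lemma mixture_prob_vmix:
  assumes "finite_pmf_on {0..ths} G" "l \<in> {0..ths}" "e \<in> {0..1}"
  shows "mixture_prob f ths (measure_pmf (vmix e l G))
           = (\<lambda>v. (1 - e) * mixture_prob f ths (measure_pmf G) v + e * f v l)"
  unfolding vmix_def using assms
  by (intro ext, subst mixture_prob_simplex_comb) (auto simp: simplex_weights_vertex)

lemma simplex_comb_single_vertex:
  assumes "finite L" "l \<in> L"
  shows "simplex_comb G (1 - e) L (\<lambda>m. if m = l then e else 0) = vmix e l G"
  unfolding vmix_def simplex_comb_def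
proof (intro arg_cong[where f = embed_pmf] ext)
  fix t :: real
  have "(\<Sum>m\<in>L. (if m = l then e else 0) * indicator {m} t)
          = (\<Sum>m\<in>L. if m = l then e * indicator {l} t else 0)"
    by (rule sum.cong) auto
  also have "\<dots> = e * indicator {l} t"
    by (simp only: sum.delta assms if_True)
  finally have sum_eq: "(\<Sum>m\<in>L. (if m = l then e else 0) * indicator {m} t) = e * indicator {l} t" .
  show "(1 - e) * pmf G t + (\<Sum>m\<in>L. (if m = l then e else 0) * indicator {m} t)
          = (1 - e) * pmf G t + (\<Sum>m\<in>{l}. e * indicator {m} t)"
    by (simp only: sum_eq sum.insert sum.empty finite.emptyI empty_iff not_False_eq_True add_0_right)
qed

lemma simplex_weights_single_vertex:
  assumes "finite L" "l \<in> L" "e \<in> {0..1}"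
  shows "simplex_weights L (1 - e) (\<lambda>m. if m = l then e else 0)"
  using assms by (simp add: simplex_weights_def sum.delta')

lemma probs_onD:
  assumes "Q \<in> probs_on ths"
  shows "prob_space Q" "sets Q = sets borel" "AE t in Q. t \<in> {0..ths}" "0 \<le> ths"
proof -
  show p: "prob_space Q" and s: "sets Q = sets borel"
    using assms by (auto simp: probs_on_def)
  interpret prob_space Q
    by (rule p)
  have "emeasure Q {0..ths} = 1"
    using assms by (simp add: probs_on_def)
  then show "AE t in Q. t \<in> {0..ths}"
    using s by (subst AE_in_set_eq_1) (auto simp: emeasure_eq_measure)
  show "0 \<le> ths"
  proof (rule ccontr)
    assume "\<not> 0 \<le> ths"
    then have "{0..ths} = {}"
      by auto
    with \<open>emeasure Q {0..ths} = 1\<close> show False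
      by simp
  qed
qed

text \<open>\<open>measure_pmf G\<close> carries the discrete \<open>\<sigma>\<close>-algebra, so it enters \<open>probs_on\<close> only after
  being restricted to the Borel sets by \<open>distr _ borel id\<close>.\<close>

lemma measure_pmf_in_probs_on:
  assumes "set_pmf G \<subseteq> {0..ths}"
  shows "distr (measure_pmf G) borel id \<in> probs_on ths"
proof -
  have "emeasure (distr (measure_pmf G) borel id) {0..ths} = emeasure (measure_pmf G) {0..ths}"
    by (subst emeasure_distr) auto
  also have "\<dots> = 1"
    using assms by (intro measure_pmf.emeasure_eq_1_AE AE_pmfI) auto
  finally show ?thesis
    by (simp add: probs_on_def measure_pmf.prob_space_distr)
qed

lemma mixture_prob_distr_measure_pmf:
  assumes "continuous_on {0..ths} (f v)"
  shows "mixture_prob f ths (distr (measure_pmf G) borel id) v = mixture_prob f ths (measure_pmf G) v"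
proof -
  have "(\<lambda>t. indicator {0..ths} t *\<^sub>R f v t) \<in> borel_measurable borel"
    using assms by (intro borel_measurable_continuous_on_indicator) auto
  then show ?thesis
    unfolding mixture_prob_def set_lebesgue_integral_def by (subst integral_distr) auto
qed

lemma Phi_distr_measure_pmf:
  assumes "\<And>v. continuous_on {0..ths} (f v)"
  shows "Phi \<phi> f ths n X (distr (measure_pmf G) borel id) = Phi \<phi> f ths n X (measure_pmf G)"
  using assms by (simp add: Phi_eq_sum_mixture_prob mixture_prob_distr_measure_pmf)

text \<open>Clamping to \<open>[0,\<theta>*]\<close> extends \<open>f v\<close> to a bounded continuous function on the whole line,
  which is what weak convergence can integrate.\<close>

lemma continuous_on_clamp_extension:
  fixes g :: "real \<Rightarrow> real"
  assumes "0 \<le> ths" "continuous_on {0..ths} g"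
  shows "continuous_on UNIV (\<lambda>t. g (max 0 (min ths t)))"
  by (rule continuous_on_compose2[OF assms(2)]) (use assms(1) in \<open>auto intro!: continuous_intros\<close>)

lemma bounded_clamp_extension:
  fixes g :: "real \<Rightarrow> real"
  assumes "0 \<le> ths" "continuous_on {0..ths} g"
  obtains B where "\<And>t. \<bar>g (max 0 (min ths t))\<bar> \<le> B"
proof -
  have "bounded (g ` {0..ths})"
    using compact_imp_bounded[OF compact_continuous_image[OF assms(2) compact_Icc]] .
  then obtain B where "\<forall>y\<in>g ` {0..ths}. norm y \<le> B"
    unfolding bounded_iff by blast
  then have "\<bar>g (max 0 (min ths t))\<bar> \<le> B" for t
    using assms(1) by auto
  then show ?thesis ..
qed

lemma mixture_prob_eq_integral_clamp:
  assumes Q: "Q \<in> probs_on ths" and ths: "0 \<le> ths" and cont: "continuous_on {0..ths} (f v)"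
  shows "mixture_prob f ths Q v = (\<integral>t. f v (max 0 (min ths t)) \<partial>Q)"
  unfolding mixture_prob_def set_lebesgue_integral_def
proof (rule integral_cong_AE)
  have "(\<lambda>t. indicator {0..ths} t *\<^sub>R f v t) \<in> borel_measurable borel"
    using cont by (intro borel_measurable_continuous_on_indicator) auto
  moreover have "(\<lambda>t. f v (max 0 (min ths t))) \<in> borel_measurable borel"
    using continuous_on_clamp_extension[OF ths cont] by (rule borel_measurable_continuous_onI)
  ultimately show "(\<lambda>t. indicator {0..ths} t *\<^sub>R f v t) \<in> borel_measurable Q"
    "(\<lambda>t. f v (max 0 (min ths t))) \<in> borel_measurable Q"
    using probs_onD(2)[OF Q] by (simp_all cong: measurable_cong_sets)
  show "AE t in Q. indicator {0..ths} t *\<^sub>R f v t = f v (max 0 (min ths t))"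
    using probs_onD(3)[OF Q] by eventually_elim auto
qed

lemma integrable_clamp_extension:
  fixes g :: "real \<Rightarrow> real"
  assumes Q: "Q \<in> probs_on ths" and ths: "0 \<le> ths" and cont: "continuous_on {0..ths} g"
  shows "integrable Q (\<lambda>t. g (max 0 (min ths t)))"
proof -
  interpret prob_space Q
    using probs_onD(1)[OF Q] .
  obtain B where "\<And>t. \<bar>g (max 0 (min ths t))\<bar> \<le> B"
    using bounded_clamp_extension[OF ths cont] by blast
  moreover have "(\<lambda>t. g (max 0 (min ths t))) \<in> borel_measurable Q"
    using borel_measurable_continuous_onI[OF continuous_on_clamp_extension[OF ths cont]]
      probs_onD(2)[OF Q] by (simp cong: measurable_cong_sets)
  ultimately show ?thesis
    by (intro integrable_const_bound[where B = B]) auto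
qed

lemma mixture_prob_nonneg:
  assumes "Q \<in> probs_on ths" "0 \<le> ths" "continuous_on {0..ths} (f v)"
    and "\<And>t. t \<in> {0..ths} \<Longrightarrow> 0 \<le> f v t"
  shows "0 \<le> mixture_prob f ths Q v"
  using assms by (simp add: mixture_prob_eq_integral_clamp)

lemma sum_mixture_prob_lower_bound:
  assumes Q: "Q \<in> probs_on ths" and ths: "0 \<le> ths" and V: "finite V"
    and cont: "\<And>v. continuous_on {0..ths} (f v)"
    and bound: "\<And>t. t \<in> {0..ths} \<Longrightarrow> m \<le> (\<Sum>v\<in>V. c v * (f v t - x v))"
  shows "m \<le> (\<Sum>v\<in>V. c v * (mixture_prob f ths Q v - x v))"
proof -
  interpret prob_space Q
    using probs_onD(1)[OF Q] .
  define F where "F v t = f v (max 0 (min ths t))" for v t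
  have int: "integrable Q (F v)" for v
    unfolding F_def using Q ths cont by (rule integrable_clamp_extension)
  have "m \<le> (\<integral>t. (\<Sum>v\<in>V. c v * (F v t - x v)) \<partial>Q)"
  proof (rule integral_ge_const)
    show "integrable Q (\<lambda>t. \<Sum>v\<in>V. c v * (F v t - x v))"
      using int by auto
    show "AE t in Q. m \<le> (\<Sum>v\<in>V. c v * (F v t - x v))"
      using probs_onD(3)[OF Q] by eventually_elim (auto simp: F_def bound)
  qed
  also have "\<dots> = (\<Sum>v\<in>V. c v * ((\<integral>t. F v t \<partial>Q) - x v))"
    using int by (simp add: Bochner_Integration.integral_sum algebra_simps prob_space)
  also have "\<dots> = (\<Sum>v\<in>V. c v * (mixture_prob f ths Q v - x v))"
    using Q ths cont by (simp add: F_def mixture_prob_eq_integral_clamp)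
  finally show ?thesis .
qed

subsection \<open>Compactness\<close>

lemma probs_on_tight:
  fixes Qs :: "nat \<Rightarrow> real measure"
  assumes "\<And>k. Qs k \<in> probs_on ths"
  shows "tight Qs"
  unfolding tight_def
proof (intro conjI allI impI)
  fix k
  show "real_distribution (Qs k)"
    using probs_onD(1,2)[OF assms] by (simp add: real_distribution_def real_distribution_axioms_def)
next
  fix \<epsilon> :: real assume "0 < \<epsilon>"
  have "1 - \<epsilon> < measure (Qs k) {-1<..ths}" for k
  proof -
    interpret prob_space "Qs k"
      using probs_onD(1)[OF assms] .
    have "1 = measure (Qs k) {0..ths}"
      using assms[of k] by (simp add: probs_on_def emeasure_eq_measure)
    also have "\<dots> \<le> measure (Qs k) {-1<..ths}"
      using probs_onD(2)[OF assms] by (intro finite_measure_mono) auto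
    finally show ?thesis
      using \<open>0 < \<epsilon>\<close> by simp
  qed
  moreover have "-1 < ths"
    using probs_onD(4)[OF assms] by simp
  ultimately show "\<exists>a b. a < b \<and> (\<forall>k. 1 - \<epsilon> < measure (Qs k) {a<..b})"
    by blast
qed

lemma distr_clamp_in_probs_on:
  assumes M: "real_distribution M" and ths: "0 \<le> ths"
  shows "distr M borel (\<lambda>t. max 0 (min ths t)) \<in> probs_on ths"
proof -
  interpret real_distribution M
    by (rule M)
  have meas: "(\<lambda>t. max 0 (min ths t)) \<in> M \<rightarrow>\<^sub>M borel"
    by (simp add: measurable_cong_sets[OF events_eq_borel refl])
  have "emeasure (distr M borel (\<lambda>t. max 0 (min ths t))) {0..ths} = emeasure M (space M)"
    using ths by (subst emeasure_distr[OF meas]) (auto intro: arg_cong[where f = "emeasure M"])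
  also have "\<dots> = 1"
    by (rule emeasure_space_1)
  finally show ?thesis
    using meas by (simp add: probs_on_def prob_space_distr)
qed

lemma mixture_prob_distr_clamp:
  assumes M: "real_distribution M" and ths: "0 \<le> ths" and cont: "continuous_on {0..ths} (f v)"
  shows "mixture_prob f ths (distr M borel (\<lambda>t. max 0 (min ths t))) v
           = (\<integral>t. f v (max 0 (min ths t)) \<partial>M)"
proof -
  interpret real_distribution M
    by (rule M)
  have meas: "(\<lambda>t. max 0 (min ths t)) \<in> M \<rightarrow>\<^sub>M borel"
    by (simp add: measurable_cong_sets[OF events_eq_borel refl])
  have "(\<lambda>t. f v (max 0 (min ths t))) \<in> borel_measurable borel"
    using continuous_on_clamp_extension[OF ths cont] by (rule borel_measurable_continuous_onI)
  then show ?thesis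
    using ths
    by (simp add: mixture_prob_eq_integral_clamp[where f = f and v = v, OF distr_clamp_in_probs_on[OF M ths] ths cont]
                  integral_distr[OF meas])
qed

lemma probs_on_subseq_mixture_prob_tendsto:
  fixes Qs :: "nat \<Rightarrow> real measure"
  assumes Qs: "\<And>k. Qs k \<in> probs_on ths" and ths: "0 \<le> ths"
    and cont: "\<And>v. continuous_on {0..ths} (f v)"
  shows "\<exists>r :: nat \<Rightarrow> nat. \<exists>M. strict_mono r \<and> M \<in> probs_on ths \<and>
                (\<forall>v. (\<lambda>k. mixture_prob f ths (Qs (r k)) v) \<longlonglongrightarrow> mixture_prob f ths M v)"
proof -
  have tight: "tight Qs"
    using Qs by (rule probs_on_tight)
  obtain r M where r: "strict_mono r" and M: "real_distribution M"
    and weak: "weak_conv_m (Qs \<circ> id \<circ> r) M"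
    using tight_imp_convergent_subsubsequence[OF tight strict_mono_id] by blast
  have "(\<lambda>k. mixture_prob f ths (Qs (r k)) v)
          \<longlonglongrightarrow> mixture_prob f ths (distr M borel (\<lambda>t. max 0 (min ths t))) v" for v
  proof -
    obtain B where B: "\<And>t. \<bar>f v (max 0 (min ths t))\<bar> \<le> B"
      using bounded_clamp_extension[OF ths cont] by blast
    have "real_distribution ((Qs \<circ> id \<circ> r) k)" for k
      using tight by (simp add: tight_def)
    moreover have "isCont (\<lambda>t. f v (max 0 (min ths t))) t" for t
      using continuous_on_clamp_extension[OF ths cont] by (simp add: continuous_on_eq_continuous_at)
    ultimately have "(\<lambda>k. \<integral>t. f v (max 0 (min ths t)) \<partial>Qs (r k)) \<longlonglongrightarrow> (\<integral>t. f v (max 0 (min ths t)) \<partial>M)"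
      using weak_conv_imp_integral_bdd_continuous_conv[OF _ M weak, of "\<lambda>t. f v (max 0 (min ths t))" B] B
      by simp
    then show ?thesis
      using Qs ths cont by (simp add: mixture_prob_eq_integral_clamp mixture_prob_distr_clamp[OF M])
  qed
  then show ?thesis
    using r distr_clamp_in_probs_on[OF M ths] by blast
qed

lemma pmf_mixture_pmf:
  assumes Q: "Q \<in> probs_on ths"
    and f_pmf: "\<And>t. t \<in> {0..ths} \<Longrightarrow> (\<forall>v. 0 \<le> f v t) \<and> (\<lambda>v. f v t) sums 1"
    and cont: "\<And>v. continuous_on {0..ths} (f v)"
  shows "pmf (mixture_pmf f ths Q) v = mixture_prob f ths Q v"
proof -
  interpret prob_space Q
    using probs_onD(1)[OF Q] .
  have ths: "0 \<le> ths"
    using probs_onD(4)[OF Q] .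
  define F where "F v t = f v (max 0 (min ths t))" for v t
  have F_nonneg: "0 \<le> F v t" for v t
    using ths f_pmf by (simp add: F_def)
  have F_meas: "F v \<in> borel_measurable Q" for v
    unfolding F_def
    using borel_measurable_continuous_onI[OF continuous_on_clamp_extension[OF ths cont]]
      probs_onD(2)[OF Q] by (simp cong: measurable_cong_sets)
  have mix: "mixture_prob f ths Q v = integral\<^sup>L Q (F v)" for v
    using Q ths cont unfolding F_def by (simp add: mixture_prob_eq_integral_clamp)
  have mix_nonneg: "0 \<le> mixture_prob f ths Q v" for v
    using F_nonneg by (simp add: mix)
  have F_int: "integrable Q (F v)" for v
    unfolding F_def using Q ths cont by (rule integrable_clamp_extension)
  have "(\<integral>\<^sup>+v. ennreal (mixture_prob f ths Q v) \<partial>count_space UNIV)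
          = (\<Sum>v. \<integral>\<^sup>+t. ennreal (F v t) \<partial>Q)"
    by (simp add: nn_integral_count_space_nat mix nn_integral_eq_integral F_int F_nonneg)
  also have "\<dots> = (\<integral>\<^sup>+t. (\<Sum>v. ennreal (F v t)) \<partial>Q)"
    using F_meas by (intro nn_integral_suminf[symmetric]) auto
  also have "\<dots> = (\<integral>\<^sup>+t. 1 \<partial>Q)"
  proof (intro nn_integral_cong)
    fix t
    have "max 0 (min ths t) \<in> {0..ths}"
      using ths by auto
    then show "(\<Sum>v. ennreal (F v t)) = 1"
      using f_pmf by (simp add: F_def suminf_ennreal2 sums_iff)
  qed
  also have "\<dots> = 1"
    by (simp add: emeasure_space_1)
  finally have "pmf (embed_pmf (mixture_prob f ths Q)) v = mixture_prob f ths Q v"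
    using mix_nonneg by (intro pmf_embed_pmf)
  moreover have "mixture_pmf f ths Q = embed_pmf (mixture_prob f ths Q)"
    by (simp add: mixture_pmf_def mixture_prob_def[abs_def])
  ultimately show ?thesis
    by simp
qed

lemma sums_one_term_le_1:
  fixes a :: "nat \<Rightarrow> real"
  assumes "\<And>i. 0 \<le> a i" "a sums 1"
  shows "a j \<le> 1"
  using sum_le_suminf[of a "{j}"] assms by (auto simp: sums_iff)

lemma set_pmf_empirical: "0 < n \<Longrightarrow> set_pmf (empirical n X) = X ` {..<n}"
  by (auto simp: empirical_def set_pmf_of_set lessThan_empty_iff)

lemma assumptionA_mixture_distance:
  assumes A: "assumptionA d \<phi>" and n: "0 < n"
    and f_pmf: "\<And>t. t \<in> {0..ths} \<Longrightarrow> (\<forall>v. 0 \<le> f v t) \<and> (\<lambda>v. f v t) sums 1"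
    and cont: "\<And>v. continuous_on {0..ths} (f v)"
  obtains c where "\<And>Q. Q \<in> probs_on ths \<Longrightarrow>
                       d (empirical n X) (mixture_pmf f ths Q) = c + Phi \<phi> f ths n X Q"
proof -
  obtain wd where wd: "\<And>p q. d p q = wd p + (\<Sum>x. \<phi> (pmf p x) (pmf q x))"
    and zero: "\<forall>y2\<ge>0. \<phi> 0 y2 = 0"
    using A unfolding assumptionA_def by blast
  have "d (empirical n X) (mixture_pmf f ths Q) = wd (empirical n X) + Phi \<phi> f ths n X Q"
    if Q: "Q \<in> probs_on ths" for Q
  proof -
    have "(\<Sum>x. \<phi> (pmf (empirical n X) x) (pmf (mixture_pmf f ths Q) x))
            = (\<Sum>x\<in>X ` {..<n}. \<phi> (pmf (empirical n X) x) (pmf (mixture_pmf f ths Q) x))"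
      using zero set_pmf_empirical[OF n, of X] by (intro suminf_finite) (auto simp: set_pmf_iff)
    also have "\<dots> = Phi \<phi> f ths n X Q"
      using pmf_mixture_pmf[OF Q f_pmf cont] by (simp add: Phi_eq_sum_mixture_prob)
    finally show ?thesis
      by (simp add: wd)
  qed
  then show thesis
    by (rule that)
qed

definition vertex_descent_step :: "(real \<Rightarrow> real \<Rightarrow> real) \<Rightarrow> (nat \<Rightarrow> real \<Rightarrow> real) \<Rightarrow> real \<Rightarrow> nat
    \<Rightarrow> (nat \<Rightarrow> nat) \<Rightarrow> real pmf \<Rightarrow> real pmf \<Rightarrow> bool" where
  "vertex_descent_step \<phi> f ths n X G G' \<longleftrightarrow>
     (\<forall>l\<in>{0..ths}. 0 \<le> Phi_dir \<phi> f ths n X G l) \<and> G' = G \<or>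
     (\<exists>l\<in>{0..ths}. (\<forall>l'\<in>{0..ths}. Phi_dir \<phi> f ths n X G l \<le> Phi_dir \<phi> f ths n X G l') \<and>
        (\<forall>e\<in>{0..1}. Phi \<phi> f ths n X (measure_pmf G') \<le> Phi \<phi> f ths n X (measure_pmf (vmix e l G))))"

lemma vdm_step_imp_vertex_descent_step:
  assumes step: "vdm_step \<phi> f ths n X G G'" and G: "finite_pmf_on {0..ths} G"
  shows "finite_pmf_on {0..ths} G' \<and> vertex_descent_step \<phi> f ths n X G G'"
proof (cases "\<exists>l\<in>{0..ths}. Phi_dir \<phi> f ths n X G l < 0")
  case True
  then obtain l e where l: "l \<in> {0..ths}"
    and l_min: "\<forall>l'\<in>{0..ths}. Phi_dir \<phi> f ths n X G l \<le> Phi_dir \<phi> f ths n X G l'"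
    and e: "e \<in> {0..1}"
    and e_min: "\<forall>e'\<in>{0..1}. Phi \<phi> f ths n X (measure_pmf (vmix e l G))
                               \<le> Phi \<phi> f ths n X (measure_pmf (vmix e' l G))"
    and G': "G' = vmix e l G"
    using step by (auto simp: vdm_step_def)
  then show ?thesis
    using G by (auto simp: vertex_descent_step_def intro: vmix_finite_pmf_on)
next
  case False
  then show ?thesis
    using step G by (auto simp: vdm_step_def vertex_descent_step_def not_less)
qed

lemma isdm_step_imp_vertex_descent_step:
  assumes step: "isdm_step \<phi> f ths n X G G'" and G: "finite_pmf_on {0..ths} G"
  shows "finite_pmf_on {0..ths} G' \<and> vertex_descent_step \<phi> f ths n X G G'"
proof (cases "\<exists>l\<in>{0..ths}. Phi_dir \<phi> f ths n X G l < 0")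
  case True
  then obtain L l e0 e where L: "finite L" and L_min: "\<forall>l\<in>L. local_min_on {0..ths} (Phi_dir \<phi> f ths n X G) l"
    and l: "l \<in> L"
    and l_min: "\<forall>l'\<in>{0..ths}. Phi_dir \<phi> f ths n X G l \<le> Phi_dir \<phi> f ths n X G l'"
    and w: "simplex_weights L e0 e"
    and w_min: "\<forall>e0' e'. simplex_weights L e0' e' \<longrightarrow>
                  Phi \<phi> f ths n X (measure_pmf (simplex_comb G e0 L e))
                    \<le> Phi \<phi> f ths n X (measure_pmf (simplex_comb G e0' L e'))"
    and G': "G' = simplex_comb G e0 L e"
    using step unfolding isdm_step_def by (simp only: if_True) blast
  have L_sub: "L \<subseteq> {0..ths}"
    using L_min by (auto simp: local_min_on_def)
  have "Phi \<phi> f ths n X (measure_pmf G') \<le> Phi \<phi> f ths n X (measure_pmf (vmix e' l G))"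
    if "e' \<in> {0..1}" for e'
    using w_min simplex_weights_single_vertex[OF L(1) l that]
    unfolding G' simplex_comb_single_vertex[OF L(1) l, symmetric] by blast
  then show ?thesis
    using l l_min L L_sub G G' w by (auto simp: vertex_descent_step_def intro!: simplex_comb_finite_pmf_on)
next
  case False
  then show ?thesis
    using step G by (auto simp: isdm_step_def vertex_descent_step_def not_less)
qed

section \<open>The objective \<open>\<Phi>\<close>\<close>

lemma C1_on_quadrant_partial_deriv:
  assumes "C1_on_quadrant \<phi>"
  obtains \<phi>' where "\<And>a y. 0 \<le> a \<Longrightarrow> 0 \<le> y \<Longrightarrow> (\<phi> a has_real_derivative \<phi>' a y) (at y within {0..})"
    and "\<And>a. 0 \<le> a \<Longrightarrow> continuous_on {0..} (\<phi>' a)"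
proof -
  obtain D1 D2 where D2_cont: "continuous_on {z. 0 \<le> fst z \<and> 0 \<le> snd z} D2"
    and D: "\<forall>z\<in>{z. 0 \<le> fst z \<and> 0 \<le> snd z}.
              ((\<lambda>u. \<phi> (fst u) (snd u)) has_derivative (\<lambda>h. D1 z * fst h + D2 z * snd h))
                (at z within {z. 0 \<le> fst z \<and> 0 \<le> snd z})"
    using assms unfolding C1_on_quadrant_def by blast
  have "(\<phi> a has_real_derivative D2 (a, y)) (at y within {0..})" if "0 \<le> a" "0 \<le> y" for a y
  proof -
    have pair: "((\<lambda>t. (a, t)) has_derivative (\<lambda>h. (0, h))) (at y within {0..})"
      by (auto intro!: derivative_eq_intros)
    have img: "(\<lambda>t. (a, t)) ` {0..} \<subseteq> {z. 0 \<le> fst z \<and> 0 \<le> snd z}"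
      using that by auto
    have "((\<lambda>t. \<phi> (fst (a, t)) (snd (a, t)))
            has_derivative (\<lambda>h. D1 (a, y) * fst (0::real, h) + D2 (a, y) * snd (0::real, h)))
            (at y within {0..})"
      by (rule has_derivative_in_compose2[where g' = "\<lambda>z h. D1 z * fst h + D2 z * snd h", OF _ img _ pair])
         (use D that in auto)
    then show ?thesis
      by (simp add: has_field_derivative_def)
  qed
  moreover have "continuous_on {0..} (\<lambda>y. D2 (a, y))" if "0 \<le> a" for a
    using that by (intro continuous_on_compose2[OF D2_cont]) (auto intro!: continuous_intros)
  ultimately show thesis
    by (rule that)
qed

locale mixture_objective =
  fixes \<phi> \<phi>' :: "real \<Rightarrow> real \<Rightarrow> real" and f :: "nat \<Rightarrow> real \<Rightarrow> real"
    and ths :: real and n :: nat and X :: "nat \<Rightarrow> nat"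
  assumes \<phi>_deriv: "\<And>a y. 0 < a \<Longrightarrow> 0 \<le> y \<Longrightarrow> (\<phi> a has_real_derivative \<phi>' a y) (at y within {0..})"
    and \<phi>'_cont: "\<And>a. 0 < a \<Longrightarrow> continuous_on {0..} (\<phi>' a)"
    and \<phi>_convex: "\<And>a. 0 < a \<Longrightarrow> convex_on {0..} (\<phi> a)"
    and f_range: "\<And>v t. t \<in> {0..ths} \<Longrightarrow> f v t \<in> {0..1}"
    and f_cont: "\<And>v. continuous_on {0..ths} (f v)"
    and ths_nonneg: "0 \<le> ths"
    and n_pos: "0 < n"
begin

abbreviation obs :: "nat set" where
  "obs \<equiv> X ` {..<n}"

abbreviation freq :: "nat \<Rightarrow> real" where
  "freq \<equiv> pmf (empirical n X)"

abbreviation \<Phi> :: "real measure \<Rightarrow> real" where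
  "\<Phi> \<equiv> Phi \<phi> f ths n X"

abbreviation \<Phi>' :: "real pmf \<Rightarrow> real \<Rightarrow> real" where
  "\<Phi>' \<equiv> Phi_dir \<phi> f ths n X"

definition objective :: "(nat \<Rightarrow> real) \<Rightarrow> real" where
  "objective y = (\<Sum>v\<in>obs. \<phi> (freq v) (y v))"

definition slope :: "(nat \<Rightarrow> real) \<Rightarrow> (nat \<Rightarrow> real) \<Rightarrow> real" where
  "slope x s = (\<Sum>v\<in>obs. \<phi>' (freq v) (x v) * (s v - x v))"

lemma freq_pos: "v \<in> obs \<Longrightarrow> 0 < freq v"
  using set_pmf_empirical[OF n_pos, of X] by (simp add: pmf_positive_iff)

lemma Phi_eq_objective: "\<Phi> Q = objective (mixture_prob f ths Q)"
  by (simp add: Phi_eq_sum_mixture_prob objective_def)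

lemma objective_segment_difference_quotient_tendsto:
  assumes "\<And>v. v \<in> obs \<Longrightarrow> 0 \<le> x v \<and> 0 \<le> s v"
  shows "((\<lambda>e. (objective (\<lambda>v. (1 - e) * x v + e * s v) - objective x) / e) \<longlongrightarrow> slope x s) (at_right 0)"
proof -
  have "((\<lambda>e. \<Sum>v\<in>obs. (\<phi> (freq v) (x v + e * (s v - x v)) - \<phi> (freq v) (x v)) / e)
          \<longlongrightarrow> slope x s) (at_right 0)"
    unfolding slope_def using assms freq_pos
    by (intro tendsto_sum segment_difference_quotient_tendsto[OF convex_real_interval(1)[of 0]] \<phi>_deriv) auto
  moreover have "(objective (\<lambda>v. (1 - e) * x v + e * s v) - objective x) / e
                   = (\<Sum>v\<in>obs. (\<phi> (freq v) (x v + e * (s v - x v)) - \<phi> (freq v) (x v)) / e)" for e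
    by (simp add: objective_def algebra_simps sum_subtractf sum_divide_distrib[symmetric])
  ultimately show ?thesis
    by simp
qed

lemma slope_le_objective_diff:
  assumes "\<And>v. v \<in> obs \<Longrightarrow> 0 \<le> x v \<and> 0 \<le> s v"
  shows "slope x s \<le> objective s - objective x"
proof -
  have "slope x s \<le> (\<Sum>v\<in>obs. \<phi> (freq v) (s v) - \<phi> (freq v) (x v))"
    unfolding slope_def using assms freq_pos
    by (intro sum_mono convex_on_above_tangent_within[OF \<phi>_convex _ _ \<phi>_deriv]) auto
  then show ?thesis
    by (simp add: objective_def sum_subtractf)
qed

lemma objective_first_order_bound:
  assumes "0 < \<eta>"
  shows "\<exists>\<delta>>0. \<forall>x s e. (\<forall>v\<in>obs. x v \<in> {0..1} \<and> s v \<in> {0..1}) \<longrightarrow> 0 \<le> e \<longrightarrow> e < \<delta> \<longrightarrow> e \<le> 1 \<longrightarrow>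
           objective (\<lambda>v. (1 - e) * x v + e * s v) \<le> objective x + e * slope x s + e * \<eta>"
proof -
  define \<eta>' where "\<eta>' = \<eta> / card obs"
  have card_pos: "0 < card obs"
    using n_pos by (simp add: card_gt_0_iff lessThan_empty_iff)
  have "\<eta>' > 0"
    using assms card_pos by (simp add: \<eta>'_def)
  then have "\<forall>v\<in>obs. \<exists>\<delta>>0. \<forall>x\<in>{0..1}. \<forall>s\<in>{0..1}. \<forall>e. 0 \<le> e \<longrightarrow> e < \<delta> \<longrightarrow> e \<le> 1 \<longrightarrow>
               \<phi> (freq v) ((1 - e) * x + e * s) - \<phi> (freq v) x - e * (\<phi>' (freq v) x * (s - x)) \<le> \<eta>' * e"
    using freq_pos by (intro ballI convex_on_segment_first_order_bound \<phi>_convex \<phi>_deriv \<phi>'_cont) auto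
  then obtain \<delta>v where \<delta>v_pos: "\<And>v. v \<in> obs \<Longrightarrow> \<delta>v v > 0"
    and \<delta>v: "\<And>v x s e. v \<in> obs \<Longrightarrow> x \<in> {0..1} \<Longrightarrow> s \<in> {0..1} \<Longrightarrow> 0 \<le> e \<Longrightarrow> e < \<delta>v v \<Longrightarrow> e \<le> 1 \<Longrightarrow>
               \<phi> (freq v) ((1 - e) * x + e * s) - \<phi> (freq v) x - e * (\<phi>' (freq v) x * (s - x)) \<le> \<eta>' * e"
    by metis
  define \<delta> where "\<delta> = Min (\<delta>v ` obs)"
  have "\<delta> > 0"
    using \<delta>v_pos n_pos by (simp add: \<delta>_def lessThan_empty_iff)
  moreover have "objective (\<lambda>v. (1 - e) * x v + e * s v) \<le> objective x + e * slope x s + e * \<eta>"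
    if xs: "\<forall>v\<in>obs. x v \<in> {0..1} \<and> s v \<in> {0..1}" and e: "0 \<le> e" "e < \<delta>" "e \<le> 1" for x s e
  proof -
    have "(\<Sum>v\<in>obs. \<phi> (freq v) ((1 - e) * x v + e * s v) - \<phi> (freq v) (x v)
             - e * (\<phi>' (freq v) (x v) * (s v - x v))) \<le> (\<Sum>v\<in>obs. \<eta>' * e)"
    proof (rule sum_mono)
      fix v assume v: "v \<in> obs"
      then have "\<delta> \<le> \<delta>v v"
        by (simp add: \<delta>_def)
      then have "e < \<delta>v v"
        using e(2) by linarith
      then show "\<phi> (freq v) ((1 - e) * x v + e * s v) - \<phi> (freq v) (x v)
                   - e * (\<phi>' (freq v) (x v) * (s v - x v)) \<le> \<eta>' * e"
        using \<delta>v[OF v] xs v e by auto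
    qed
    also have "\<dots> = e * \<eta>"
      using card_pos n_pos by (simp add: \<eta>'_def lessThan_empty_iff)
    finally show ?thesis
      by (simp add: objective_def slope_def sum_subtractf sum_distrib_left)
  qed
  ultimately show ?thesis
    by blast
qed

lemma mixture_prob_pmf_range:
  "finite_pmf_on {0..ths} G \<Longrightarrow> mixture_prob f ths (measure_pmf G) v \<in> {0..1}"
  by (rule mixture_prob_measure_pmf_bounds[OF _ f_range])

lemma Phi_dir_eq_slope:
  assumes G: "finite_pmf_on {0..ths} G" and l: "l \<in> {0..ths}"
  shows "\<Phi>' G l = slope (mixture_prob f ths (measure_pmf G)) (\<lambda>v. f v l)"
proof -
  let ?x = "mixture_prob f ths (measure_pmf G)"
  have "((\<lambda>e. (objective (\<lambda>v. (1 - e) * ?x v + e * f v l) - objective ?x) / e)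
          \<longlongrightarrow> slope ?x (\<lambda>v. f v l)) (at_right 0)"
    using mixture_prob_pmf_range[OF G] f_range[OF l]
    by (intro objective_segment_difference_quotient_tendsto) auto
  moreover have "\<forall>\<^sub>F e in at_right 0. (\<Phi> (measure_pmf (vmix e l G)) - \<Phi> (measure_pmf G)) / e
                   = (objective (\<lambda>v. (1 - e) * ?x v + e * f v l) - objective ?x) / e"
    using G l by (intro eventually_at_rightI[of 0 1]) (auto simp: Phi_eq_objective mixture_prob_vmix)
  ultimately have "((\<lambda>e. (\<Phi> (measure_pmf (vmix e l G)) - \<Phi> (measure_pmf G)) / e)
                     \<longlongrightarrow> slope ?x (\<lambda>v. f v l)) (at_right 0)"
    using tendsto_cong by fast
  then show ?thesis
    unfolding Phi_dir_def by (intro tendsto_Lim) simp_all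
qed

text \<open>The directional derivative towards \<open>Q\<close> is the \<open>Q\<close>-average of the vertex ones, and by
  convexity it lies below \<open>\<Phi> Q - \<Phi> G\<close>.\<close>

lemma Phi_dir_lower_bound_imp_gap:
  assumes G: "finite_pmf_on {0..ths} G" and Q: "Q \<in> probs_on ths"
    and m: "\<And>l. l \<in> {0..ths} \<Longrightarrow> m \<le> \<Phi>' G l"
  shows "m \<le> \<Phi> Q - \<Phi> (measure_pmf G)"
proof -
  let ?x = "mixture_prob f ths (measure_pmf G)"
  have "m \<le> slope ?x (mixture_prob f ths Q)"
    unfolding slope_def
    by (rule sum_mixture_prob_lower_bound[OF Q ths_nonneg _ f_cont])
       (use m G in \<open>simp_all add: Phi_dir_eq_slope slope_def\<close>)
  also have "\<dots> \<le> objective (mixture_prob f ths Q) - objective ?x"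
    using mixture_prob_pmf_range[OF G] mixture_prob_nonneg[OF Q ths_nonneg f_cont] f_range
    by (intro slope_le_objective_diff) auto
  finally show ?thesis
    by (simp add: Phi_eq_objective)
qed

lemma Phi_vmix_first_order_bound:
  assumes "0 < \<eta>"
  shows "\<exists>\<delta>>0. \<forall>G l e. finite_pmf_on {0..ths} G \<longrightarrow> l \<in> {0..ths} \<longrightarrow> 0 \<le> e \<longrightarrow> e < \<delta> \<longrightarrow> e \<le> 1 \<longrightarrow>
           \<Phi> (measure_pmf (vmix e l G)) \<le> \<Phi> (measure_pmf G) + e * \<Phi>' G l + e * \<eta>"
proof -
  obtain \<delta> where "\<delta> > 0"
    and bound: "\<And>x s e. \<forall>v\<in>obs. x v \<in> {0..1} \<and> s v \<in> {0..1} \<Longrightarrow> 0 \<le> e \<Longrightarrow> e < \<delta> \<Longrightarrow> e \<le> 1 \<Longrightarrow>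
                  objective (\<lambda>v. (1 - e) * x v + e * s v) \<le> objective x + e * slope x s + e * \<eta>"
    using objective_first_order_bound[OF assms] by blast
  have "\<Phi> (measure_pmf (vmix e l G)) \<le> \<Phi> (measure_pmf G) + e * \<Phi>' G l + e * \<eta>"
    if G: "finite_pmf_on {0..ths} G" and l: "l \<in> {0..ths}" and e: "0 \<le> e" "e < \<delta>" "e \<le> 1" for G l e
    using bound[of "mixture_prob f ths (measure_pmf G)" "\<lambda>v. f v l" e] e
      mixture_prob_pmf_range[OF G] f_range[OF l]
    by (simp add: Phi_eq_objective mixture_prob_vmix[OF G l] Phi_dir_eq_slope[OF G l])
  with \<open>\<delta> > 0\<close> show ?thesis
    by blast
qed

lemma \<phi>_continuous:
  assumes "0 < a"
  shows "continuous_on {0..} (\<phi> a)"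
  unfolding continuous_on_eq_continuous_within
  using DERIV_continuous[OF \<phi>_deriv[OF assms]] by auto

lemma Phi_attains_min:
  assumes "bdd_below (\<Phi> ` probs_on ths)"
  shows "\<exists>Q\<in>probs_on ths. \<forall>Q'\<in>probs_on ths. \<Phi> Q \<le> \<Phi> Q'"
proof (rule attains_min_if_subsequences_converge[OF _ assms])
  show "probs_on ths \<noteq> {}"
    using measure_pmf_in_probs_on[of "return_pmf 0" ths] ths_nonneg by auto
next
  fix Qs :: "nat \<Rightarrow> real measure"
  assume Qs: "\<And>k. Qs k \<in> probs_on ths"
  obtain r M where r: "strict_mono r" and M: "M \<in> probs_on ths"
    and lim: "\<And>v. (\<lambda>k. mixture_prob f ths (Qs (r k)) v) \<longlonglongrightarrow> mixture_prob f ths M v"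
    using probs_on_subseq_mixture_prob_tendsto[of Qs ths f] Qs ths_nonneg f_cont by blast
  have "(\<lambda>k. \<phi> (freq v) (mixture_prob f ths (Qs (r k)) v)) \<longlonglongrightarrow> \<phi> (freq v) (mixture_prob f ths M v)"
    if "v \<in> obs" for v
    using Qs M f_range freq_pos[OF that] ths_nonneg f_cont
    by (intro continuous_on_tendsto_compose[OF \<phi>_continuous lim])
       (auto intro!: mixture_prob_nonneg always_eventually)
  then have "(\<lambda>k. \<Phi> (Qs (r k))) \<longlonglongrightarrow> \<Phi> M"
    unfolding Phi_eq_objective objective_def by (intro tendsto_sum)
  with r M show "\<exists>r :: nat \<Rightarrow> nat. \<exists>M. strict_mono r \<and> M \<in> probs_on ths \<and> (\<lambda>k. \<Phi> (Qs (r k))) \<longlonglongrightarrow> \<Phi> M"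
    by blast
qed

lemma vertex_descent_step_progress:
  assumes Qh: "Qh \<in> probs_on ths" and opt: "\<forall>Q\<in>probs_on ths. \<Phi> Qh \<le> \<Phi> Q"
    and G: "finite_pmf_on {0..ths} G" and step: "vertex_descent_step \<phi> f ths n X G G'"
    and e: "e \<in> {0..1}" and \<eta>: "0 \<le> \<eta>"
    and bound: "\<And>l. l \<in> {0..ths} \<Longrightarrow> \<Phi> (measure_pmf (vmix e l G)) \<le> \<Phi> (measure_pmf G) + e * \<Phi>' G l + e * \<eta>"
  shows "\<Phi> (measure_pmf G') - \<Phi> Qh \<le> (1 - e) * (\<Phi> (measure_pmf G) - \<Phi> Qh) + e * \<eta>"
  using step unfolding vertex_descent_step_def
proof (elim disjE conjE bexE)
  assume "\<forall>l\<in>{0..ths}. 0 \<le> \<Phi>' G l" and "G' = G"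
  then have "\<Phi> (measure_pmf G) - \<Phi> Qh \<le> 0"
    using Phi_dir_lower_bound_imp_gap[OF G Qh, of 0] by simp
  moreover have "\<Phi> Qh \<le> \<Phi> (measure_pmf G)"
    using opt measure_pmf_in_probs_on[of G ths] G f_cont
    by (auto simp: finite_pmf_on_def Phi_distr_measure_pmf)
  ultimately show ?thesis
    using \<open>G' = G\<close> e \<eta> by simp
next
  fix l assume l: "l \<in> {0..ths}" and "\<forall>l'\<in>{0..ths}. \<Phi>' G l \<le> \<Phi>' G l'"
    and G': "\<forall>e\<in>{0..1}. \<Phi> (measure_pmf G') \<le> \<Phi> (measure_pmf (vmix e l G))"
  then have "\<Phi>' G l \<le> \<Phi> Qh - \<Phi> (measure_pmf G)"
    by (intro Phi_dir_lower_bound_imp_gap[OF G Qh]) auto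
  then have "e * \<Phi>' G l \<le> e * (\<Phi> Qh - \<Phi> (measure_pmf G))"
    using e by (intro mult_left_mono) auto
  then show ?thesis
    using G'[rule_format, OF e] bound[OF l] by (simp add: algebra_simps)
qed

lemma vertex_descent_iterates_converge:
  assumes Qh: "Qh \<in> probs_on ths" and opt: "\<forall>Q\<in>probs_on ths. \<Phi> Qh \<le> \<Phi> Q"
    and G0: "G 0 = return_pmf l0" "l0 \<in> {0..ths}"
    and descent: "\<And>G G'. S G G' \<Longrightarrow> finite_pmf_on {0..ths} G \<Longrightarrow>
                    finite_pmf_on {0..ths} G' \<and> vertex_descent_step \<phi> f ths n X G G'"
    and S: "\<forall>k. S (G k) (G (Suc k))"
  shows "(\<lambda>k. \<Phi> (measure_pmf (G k))) \<longlonglongrightarrow> \<Phi> Qh"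
proof -
  have G: "finite_pmf_on {0..ths} (G k)" for k
    by (induction k) (use G0 descent S in \<open>auto intro: finite_pmf_on_return_pmf\<close>)
  define h where "h k = \<Phi> (measure_pmf (G k)) - \<Phi> Qh" for k
  have "h \<longlonglongrightarrow> 0"
  proof (rule tendsto_zero_of_relaxed_descent)
    show "0 \<le> h k" for k
      using opt measure_pmf_in_probs_on[of "G k" ths] G[of k] f_cont
      by (auto simp: h_def finite_pmf_on_def Phi_distr_measure_pmf)
  next
    fix \<eta> :: real assume "0 < \<eta>"
    then obtain \<delta> where "\<delta> > 0" and bound: "\<forall>G l e. finite_pmf_on {0..ths} G \<longrightarrow> l \<in> {0..ths} \<longrightarrow>
        0 \<le> e \<longrightarrow> e < \<delta> \<longrightarrow> e \<le> 1 \<longrightarrow>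
        \<Phi> (measure_pmf (vmix e l G)) \<le> \<Phi> (measure_pmf G) + e * \<Phi>' G l + e * \<eta>"
      using Phi_vmix_first_order_bound by blast
    have "h (Suc k) \<le> (1 - e) * h k + e * \<eta>" if "0 \<le> e" "e < \<delta>" "e \<le> 1" for k e
      unfolding h_def using that G bound \<open>0 < \<eta>\<close> descent S
      by (intro vertex_descent_step_progress[OF Qh opt]) auto
    with \<open>\<delta> > 0\<close> show "\<exists>\<delta>>0. \<forall>k e. 0 \<le> e \<longrightarrow> e < \<delta> \<longrightarrow> e \<le> 1 \<longrightarrow> h (Suc k) \<le> (1 - e) * h k + e * \<eta>"
      by blast
  qed
  then show ?thesis
    by (simp add: h_def[abs_def] LIM_zero_iff)
qed

lemma vdm_converges:
  assumes "Qh \<in> probs_on ths" "\<forall>Q\<in>probs_on ths. \<Phi> Qh \<le> \<Phi> Q"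
    and "l0 \<in> {0..ths}" "G 0 = return_pmf l0" "\<forall>k. vdm_step \<phi> f ths n X (G k) (G (Suc k))"
  shows "(\<lambda>k. \<Phi> (measure_pmf (G k))) \<longlonglongrightarrow> \<Phi> Qh"
  using assms by (intro vertex_descent_iterates_converge[where S = "vdm_step \<phi> f ths n X"]
                    vdm_step_imp_vertex_descent_step) auto

lemma isdm_converges:
  assumes "Qh \<in> probs_on ths" "\<forall>Q\<in>probs_on ths. \<Phi> Qh \<le> \<Phi> Q"
    and "l0 \<in> {0..ths}" "G 0 = return_pmf l0" "\<forall>k. isdm_step \<phi> f ths n X (G k) (G (Suc k))"
  shows "(\<lambda>k. \<Phi> (measure_pmf (G k))) \<longlonglongrightarrow> \<Phi> Qh"
  using assms by (intro vertex_descent_iterates_converge[where S = "isdm_step \<phi> f ths n X"]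
                    isdm_step_imp_vertex_descent_step) auto

end

lemma assumptionA_mixture_objective:
  assumes A: "assumptionA d \<phi>" and ths: "0 \<le> ths"
    and f_pmf: "\<And>t. t \<in> {0..ths} \<Longrightarrow> (\<forall>v. 0 \<le> f v t) \<and> (\<lambda>v. f v t) sums 1"
    and f_cont: "\<And>v. continuous_on {0..ths} (f v)" and n: "0 < n"
  obtains \<phi>' where "mixture_objective \<phi> \<phi>' f ths n"
proof -
  obtain \<phi>' where deriv: "\<And>a y. 0 \<le> a \<Longrightarrow> 0 \<le> y \<Longrightarrow> (\<phi> a has_real_derivative \<phi>' a y) (at y within {0..})"
    and cont: "\<And>a. 0 \<le> a \<Longrightarrow> continuous_on {0..} (\<phi>' a)"
    using A C1_on_quadrant_partial_deriv unfolding assumptionA_def by metis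
  have "mixture_objective \<phi> \<phi>' f ths n"
  proof
    show "convex_on {0..} (\<phi> a)" if "0 < a" for a
      using A that by (auto simp: assumptionA_def intro: strict_convex_on_set_imp_convex_on)
    show "f v t \<in> {0..1}" if "t \<in> {0..ths}" for v t
      using f_pmf[OF that] sums_one_term_le_1[of "\<lambda>v. f v t"] by auto
  qed (use deriv cont f_cont ths n in auto)
  then show thesis
    by (rule that)
qed

theorem theorem2:
  fixes g :: "real \<Rightarrow> real" and w :: "nat \<Rightarrow> real" and ths :: real
    and f :: "nat \<Rightarrow> real \<Rightarrow> real"
    and n :: nat and X :: "nat \<Rightarrow> nat"
    and d :: "nat pmf \<Rightarrow> nat pmf \<Rightarrow> real" and \<phi> :: "real \<Rightarrow> real \<Rightarrow> real"
  assumes f_def: "\<And>x \<theta>. f x \<theta> = g \<theta> * w x * \<theta> ^ x"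
    and g_analytic: "analytic_near_zero g"
    and ths_nonneg: "0 \<le> ths"
    and ths_lt: "ereal ths < conv_radius w"
    and f_pmf: "\<And>\<theta>. \<theta> \<in> {0..ths} \<Longrightarrow> (\<forall>x. 0 \<le> f x \<theta>) \<and> (\<lambda>x. f x \<theta>) sums 1"
    and f_cont: "\<And>x. continuous_on {0..ths} (f x)"
    and n_pos: "0 < n"
    and d_dist: "generalized_distance d"
    and d_A: "assumptionA d \<phi>"
  shows "(\<exists>Q\<in>probs_on ths. \<forall>Q'\<in>probs_on ths.
            d (empirical n X) (mixture_pmf f ths Q) \<le> d (empirical n X) (mixture_pmf f ths Q'))
       \<and> (\<forall>Qh\<in>probs_on ths.
            (\<forall>Q'\<in>probs_on ths.
               d (empirical n X) (mixture_pmf f ths Qh) \<le> d (empirical n X) (mixture_pmf f ths Q')) \<longrightarrow>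
            (\<forall>l0 G. l0 \<in> {0<..<ths} \<and> G 0 = return_pmf l0 \<and>
                   (\<forall>k. vdm_step \<phi> f ths n X (G k) (G (Suc k))) \<longrightarrow>
                   (\<lambda>k. Phi \<phi> f ths n X (measure_pmf (G k))) \<longlonglongrightarrow> Phi \<phi> f ths n X Qh) \<and>
            (\<forall>l0 G. l0 \<in> {0<..<ths} \<and> G 0 = return_pmf l0 \<and>
                   (\<forall>k. isdm_step \<phi> f ths n X (G k) (G (Suc k))) \<longrightarrow>
                   (\<lambda>k. Phi \<phi> f ths n X (measure_pmf (G k))) \<longlonglongrightarrow> Phi \<phi> f ths n X Qh))"
proof -
  obtain \<phi>' where "mixture_objective \<phi> \<phi>' f ths n"
    using assumptionA_mixture_objective[OF d_A ths_nonneg f_pmf f_cont n_pos] .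
  then interpret mixture_objective \<phi> \<phi>' f ths n X .
  obtain c where dist: "\<And>Q. Q \<in> probs_on ths \<Longrightarrow> d (empirical n X) (mixture_pmf f ths Q) = c + \<Phi> Q"
    using assumptionA_mixture_distance[OF d_A n_pos f_pmf f_cont] by blast
  have d_min_iff: "(\<forall>Q'\<in>probs_on ths. d (empirical n X) (mixture_pmf f ths Q) \<le> d (empirical n X) (mixture_pmf f ths Q'))
                     \<longleftrightarrow> (\<forall>Q'\<in>probs_on ths. \<Phi> Q \<le> \<Phi> Q')" if "Q \<in> probs_on ths" for Q
    using dist that by auto
  have "- c \<le> \<Phi> Q" if "Q \<in> probs_on ths" for Q
    using d_dist[unfolded generalized_distance_def, rule_format, THEN conjunct1,
        of "empirical n X" "mixture_pmf f ths Q"] dist[OF that] by linarith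
  then have "\<exists>Q\<in>probs_on ths. \<forall>Q'\<in>probs_on ths. \<Phi> Q \<le> \<Phi> Q'"
    by (intro Phi_attains_min bdd_belowI2)
  moreover have "(\<lambda>k. \<Phi> (measure_pmf (G k))) \<longlonglongrightarrow> \<Phi> Qh"
    if "Qh \<in> probs_on ths" "\<forall>Q'\<in>probs_on ths. \<Phi> Qh \<le> \<Phi> Q'" "l0 \<in> {0<..<ths}" "G 0 = return_pmf l0"
      and "(\<forall>k. vdm_step \<phi> f ths n X (G k) (G (Suc k))) \<or> (\<forall>k. isdm_step \<phi> f ths n X (G k) (G (Suc k)))"
    for Qh l0 G
    using that vdm_converges[of Qh l0 G] isdm_converges[of Qh l0 G] by auto
  ultimately show ?thesis
    using d_min_iff by blast
qed

end
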